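(* Let $\prec$ be a coherent contextual order on $\widetilde{\Sigma}=\widetilde{\Sigma}_1\uplus\widetilde{\Sigma}_2$ (with $\widetilde{\Sigma}_1,\widetilde{\Sigma}_2$ disjoint visibly pushdown alphabets) and let $P_1,P_2$ be well-matched visibly pushdown languages over $\widetilde{\Sigma}_1,\widetilde{\Sigma}_2$ respectively. Then $\mathrm{red}_\prec(P_1\parallel P_2)\subseteq\mathsf{wn}(P_1\parallel P_2)$.
   Context: A visibly pushdown (VP) alphabet is a finite alphabet partitioned into calls $\Sigma^{\mathsf{call}}$, returns $\Sigma^{\mathsf{ret}}$ and internals $\Sigma^{\mathsf{int}}$; write $\Sigma^{\mathsf{call}}_i,\Sigma^{\mathsf{ret}}_i$ for those of $\widetilde{\Sigma}_i$. Calls and returns in a word are matched like opening and closing parentheses (internals ignored); unmatched calls/returns are pending; a word is well-matched if none are pending. A visibly pushdown language is one accepted by a visibly pushdown automaton (pushes one symbol on each call, pops on each return, stack unchanged on internals). Shuffle: $P_1\parallel P_2=\{w\in\widetilde{\Sigma}^*:\Pi_{\widetilde{\Sigma}_i}(w)\in P_i\}$ with $\Pi_{\widetilde{\Sigma}_i}$ erasing letters outside $\widetilde{\Sigma}_i$. A word is well-nested if every matched call–return pair consists of letters from the same $\widetilde{\Sigma}_k$; $\mathsf{wn}(L)$ is the set of well-nested words of $L$. $\mathbb{I}=\{(a,b):a\in\widetilde{\Sigma}_i,b\in\widetilde{\Sigma}_j,i\ne j\}$, $\equiv_{\mathbb{I}}$ the least reflexive transitive relation with $uabv\equiv_{\mathbb{I}}ubav$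 for $(a,b)\in\mathbb{I}$. A contextual order is a map $\prec$ from $\widetilde{\Sigma}^*$ to strict total orders on $\widetilde{\Sigma}$; it induces $\preceq$: $\sigma\preceq\rho$ iff $\sigma$ is a prefix of $\rho$ or $\sigma=\alpha a\beta$, $\rho=\alpha b\gamma$ with $a\prec_\alpha b$. $\mathrm{red}_\prec(L)=\{w\in L:\forall u\in L,(u\equiv_{\mathbb{I}}w\wedge u\preceq w)\Rightarrow u=w\}$. A contextual order $\prec$ is coherent if for every $u\in\widetilde{\Sigma}^*$ and $i\in\{1,2\}$: if $u$ has pending calls and the last pending call of $u$ is in $\Sigma^{\mathsf{call}}_i$, then $a\prec_u r$ for every $a\in\widetilde{\Sigma}_i$ and every $r\in\bigcup_{j\ne i}\Sigma^{\mathsf{ret}}_j$. *)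

theory Defs
  imports Main
begin

definition vp_alphabet :: "'a set \<Rightarrow> 'a set \<Rightarrow> 'a set \<Rightarrow> bool" where
  "vp_alphabet C R I \<longleftrightarrow> finite C \<and> finite R \<and> finite I \<and>
     C \<inter> R = {} \<and> C \<inter> I = {} \<and> R \<inter> I = {}"

inductive balanced :: "'a set \<Rightarrow> 'a set \<Rightarrow> 'a list \<Rightarrow> bool" for C R where
  bal_nil: "balanced C R []"
| bal_int: "a \<notin> C \<Longrightarrow> a \<notin> R \<Longrightarrow> balanced C R [a]"
| bal_nest: "c \<in> C \<Longrightarrow> r \<in> R \<Longrightarrow> balanced C R u \<Longrightarrow> balanced C R (c # u @ [r])"
| bal_app: "balanced C R u \<Longrightarrow> balanced C R v \<Longrightarrow> balanced C R (u @ v)"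

definition matched :: "'a set \<Rightarrow> 'a set \<Rightarrow> 'a list \<Rightarrow> nat \<Rightarrow> nat \<Rightarrow> bool" where
  "matched C R w i j \<longleftrightarrow> i < j \<and> j < length w \<and> w ! i \<in> C \<and> w ! j \<in> R \<and>
     balanced C R (take (j - i - 1) (drop (i + 1) w))"

definition pending_call :: "'a set \<Rightarrow> 'a set \<Rightarrow> 'a list \<Rightarrow> nat \<Rightarrow> bool" where
  "pending_call C R w i \<longleftrightarrow> i < length w \<and> w ! i \<in> C \<and> \<not> (\<exists>j. matched C R w i j)"

definition pending_return :: "'a set \<Rightarrow> 'a set \<Rightarrow> 'a list \<Rightarrow> nat \<Rightarrow> bool" where
  "pending_return C R w j \<longleftrightarrow> j < length w \<and> w ! j \<in> R \<and> \<not> (\<exists>i. matched C R w i j)"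

definition well_matched :: "'a set \<Rightarrow> 'a set \<Rightarrow> 'a list \<Rightarrow> bool" where
  "well_matched C R w \<longleftrightarrow> (\<forall>i. \<not> pending_call C R w i \<and> \<not> pending_return C R w i)"

text \<open>Configurations: (state, stack), stack top at the head. States and stack symbols are nat.\<close>
definition vpa_step ::
  "'a set \<Rightarrow> 'a set \<Rightarrow> 'a set \<Rightarrow> (nat \<times> 'a \<times> nat \<times> nat) set \<Rightarrow> (nat \<times> 'a \<times> nat \<times> nat) set
   \<Rightarrow> (nat \<times> 'a \<times> nat) set \<Rightarrow> nat \<times> nat list \<Rightarrow> 'a \<Rightarrow> nat \<times> nat list \<Rightarrow> bool" where
  "vpa_step C R I dc dr di cf a cf' \<longleftrightarrow>
     (a \<in> C \<and> (\<exists>g. (fst cf, a, fst cf', g) \<in> dc \<and> snd cf' = g # snd cf)) \<or>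
     (a \<in> R \<and> (\<exists>g. (fst cf, a, g, fst cf') \<in> dr \<and> snd cf = g # snd cf')) \<or>
     (a \<in> I \<and> (fst cf, a, fst cf') \<in> di \<and> snd cf' = snd cf)"
  \<comment> \<open>dc: (q, call, q', pushed symbol); dr: (q, return, popped symbol, q'); di: (q, internal, q')\<close>

fun vpa_run ::
  "'a set \<Rightarrow> 'a set \<Rightarrow> 'a set \<Rightarrow> (nat \<times> 'a \<times> nat \<times> nat) set \<Rightarrow> (nat \<times> 'a \<times> nat \<times> nat) set
   \<Rightarrow> (nat \<times> 'a \<times> nat) set \<Rightarrow> nat \<times> nat list \<Rightarrow> 'a list \<Rightarrow> nat \<times> nat list \<Rightarrow> bool" where
  "vpa_run C R I dc dr di cf [] cf' \<longleftrightarrow> cf' = cf"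
| "vpa_run C R I dc dr di cf (a # w) cf'' \<longleftrightarrow>
     (\<exists>cf'. vpa_step C R I dc dr di cf a cf' \<and> vpa_run C R I dc dr di cf' w cf'')"

definition vpl :: "'a set \<Rightarrow> 'a set \<Rightarrow> 'a set \<Rightarrow> 'a list set \<Rightarrow> bool" where
  "vpl C R I L \<longleftrightarrow> (\<exists>(Q::nat set) Q0 F (G::nat set) dc dr di.
     finite Q \<and> finite G \<and> Q0 \<subseteq> Q \<and> F \<subseteq> Q \<and>
     dc \<subseteq> Q \<times> C \<times> Q \<times> G \<and> dr \<subseteq> Q \<times> R \<times> G \<times> Q \<and> di \<subseteq> Q \<times> I \<times> Q \<and>
     L = {w. \<exists>q0\<in>Q0. \<exists>qf\<in>F. \<exists>s. vpa_run C R I dc dr di (q0, []) w (qf, s)})"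

definition shuffle :: "'a set \<Rightarrow> 'a set \<Rightarrow> 'a list set \<Rightarrow> 'a list set \<Rightarrow> 'a list set" where
  "shuffle S1 S2 P1 P2 = {w \<in> lists (S1 \<union> S2).
      filter (\<lambda>x. x \<in> S1) w \<in> P1 \<and> filter (\<lambda>x. x \<in> S2) w \<in> P2}"

definition indep :: "'a set \<Rightarrow> 'a set \<Rightarrow> ('a \<times> 'a) set" where
  "indep S1 S2 = {(a, b). (a \<in> S1 \<and> b \<in> S2) \<or> (a \<in> S2 \<and> b \<in> S1)}"

definition swap_step :: "('a \<times> 'a) set \<Rightarrow> 'a list \<Rightarrow> 'a list \<Rightarrow> bool" where
  "swap_step Ind u v \<longleftrightarrow> (\<exists>x y a b. (a, b) \<in> Ind \<and> u = x @ a # b # y \<and> v = x @ b # a # y)"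

definition trace_equiv :: "('a \<times> 'a) set \<Rightarrow> 'a list \<Rightarrow> 'a list \<Rightarrow> bool" where
  "trace_equiv Ind = (swap_step Ind)\<^sup>*\<^sup>*"

definition wn :: "'a set \<Rightarrow> 'a set \<Rightarrow> 'a set \<Rightarrow> 'a set \<Rightarrow> 'a list set \<Rightarrow> 'a list set" where
  "wn C R S1 S2 L = {w \<in> L. \<forall>i j. matched C R w i j \<longrightarrow>
      (w ! i \<in> S1 \<and> w ! j \<in> S1) \<or> (w ! i \<in> S2 \<and> w ! j \<in> S2)}"

definition contextual_order :: "'a set \<Rightarrow> ('a list \<Rightarrow> ('a \<times> 'a) set) \<Rightarrow> bool" where
  "contextual_order S ord \<longleftrightarrow>
     (\<forall>u \<in> lists S. ord u \<subseteq> S \<times> S \<and> strict_linear_order_on S (ord u))"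

definition ctx_le :: "('a list \<Rightarrow> ('a \<times> 'a) set) \<Rightarrow> 'a list \<Rightarrow> 'a list \<Rightarrow> bool" where
  "ctx_le ord \<sigma> \<rho> \<longleftrightarrow> (\<exists>z. \<rho> = \<sigma> @ z) \<or>
     (\<exists>\<alpha> a b \<beta> \<gamma>. \<sigma> = \<alpha> @ a # \<beta> \<and> \<rho> = \<alpha> @ b # \<gamma> \<and> (a, b) \<in> ord \<alpha>)"

definition red :: "('a list \<Rightarrow> ('a \<times> 'a) set) \<Rightarrow> ('a \<times> 'a) set \<Rightarrow> 'a list set \<Rightarrow> 'a list set" where
  "red ord Ind L = {w \<in> L. \<forall>u \<in> L. (trace_equiv Ind u w \<and> ctx_le ord u w) \<longrightarrow> u = w}"

definition coherent ::
  "'a set \<Rightarrow> 'a set \<Rightarrow> 'a set \<Rightarrow> 'a set \<Rightarrow> 'a set \<Rightarrow> 'a set \<Rightarrow> ('a list \<Rightarrow> ('a \<times> 'a) set) \<Rightarrow> bool" where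
  "coherent C1 R1 I1 C2 R2 I2 ord \<longleftrightarrow>
     (\<forall>u \<in> lists (C1 \<union> R1 \<union> I1 \<union> C2 \<union> R2 \<union> I2). \<forall>k.
        (pending_call (C1 \<union> C2) (R1 \<union> R2) u k \<and>
         (\<forall>k'. pending_call (C1 \<union> C2) (R1 \<union> R2) u k' \<longrightarrow> k' \<le> k)) \<longrightarrow>
        ((u ! k \<in> C1 \<longrightarrow> (\<forall>a \<in> C1 \<union> R1 \<union> I1. \<forall>r \<in> R2. (a, r) \<in> ord u)) \<and>
         (u ! k \<in> C2 \<longrightarrow> (\<forall>a \<in> C2 \<union> R2 \<union> I2. \<forall>r \<in> R1. (a, r) \<in> ord u))))"

end

theory Submission
  imports Defs
begin

text \<open>Suppose w is reduced but some matched pair (i, j) crosses the components, say the call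
  w!i lies in the first and the return w!j in the second, with j minimal. By minimality the
  segment strictly between i and j is well-nested, so its projection to the first component is
  balanced. The projection of w to the first component is well-matched, so the call w!i must be
  matched there by a letter of the first component occurring after position j. Moving the first
  such letter a to position j, across the letters of the second component, gives a
  trace-equivalent word of the shuffle. Since i is the last pending call of the prefix of length
  j, coherence puts a before w!j in the order at that prefix, so the new word is strictly smaller
  than w: a contradiction.\<close>

section \<open>Balanced words\<close>

definition occs :: "'a set \<Rightarrow> 'a list \<Rightarrow> nat" where
  "occs A xs = length (filter (\<lambda>x. x \<in> A) xs)"

lemma occs_simps [simp]:
  "occs A [] = 0"
  "occs A (x # xs) = (if x \<in> A then Suc (occs A xs) else occs A xs)"
  "occs A (xs @ ys) = occs A xs + occs A ys"
  by (auto simp: occs_def)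

lemma balanced_occs:
  assumes "balanced C R v" "C \<inter> R = {}"
  shows "occs C v = occs R v \<and> (\<forall>n. occs R (take n v) \<le> occs C (take n v))"
  using assms(1)
proof induction
  case bal_nil
  then show ?case by simp
next
  case (bal_int a)
  then show ?case by (auto simp: take_Cons')
next
  case (bal_nest c r u)
  have "occs R (take n (c # u @ [r])) \<le> occs C (take n (c # u @ [r]))" for n
  proof (cases n)
    case (Suc m)
    have "occs R (take m u) \<le> occs C (take m u)" using bal_nest by blast
    then have "occs R (take m u) \<le> Suc (occs C (take m u))" by simp
    then show ?thesis using Suc bal_nest assms(2) by (cases "m \<le> length u") auto
  qed simp
  then show ?case using bal_nest assms(2) by auto
next
  case (bal_app u v)
  have "occs R (take n (u @ v)) \<le> occs C (take n (u @ v))" for n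
    using bal_app by (cases "n \<le> length u") auto
  then show ?case using bal_app by auto
qed

lemma balanced_prefix_next_not_return:
  assumes "balanced C R v" "C \<inter> R = {}" "n < length v" "balanced C R (take n v)"
  shows "v ! n \<notin> R"
proof
  assume "v ! n \<in> R"
  then have "v ! n \<notin> C" using assms(2) by blast
  moreover have "take (Suc n) v = take n v @ [v ! n]"
    using assms(3) by (simp add: take_Suc_conv_app_nth)
  moreover have "occs R (take (Suc n) v) \<le> occs C (take (Suc n) v)"
    using balanced_occs[OF assms(1,2)] by blast
  moreover have "occs C (take n v) = occs R (take n v)"
    using balanced_occs[OF assms(4,2)] by blast
  ultimately show False using \<open>v ! n \<in> R\<close> by auto
qed

lemma matched_append_shift:
  assumes "matched C R u p q"
  shows "matched C R (x @ u @ y) (p + length x) (q + length x)"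
proof -
  have pq: "p < q" "q < length u" using assms by (auto simp: matched_def)
  then have "take (q - p - 1) (drop (p + length x + 1) (x @ u @ y)) = take (q - p - 1) (drop (p + 1) u)"
    by (simp add: drop_append take_append)
  then show ?thesis using assms pq by (auto simp: matched_def nth_append)
qed

lemma matched_take_eq:
  assumes "matched C R w i j"
  shows "take j w = take i w @ w ! i # take (j - i - 1) (drop (i + 1) w)"
proof -
  have ij: "i < j" "j < length w" using assms by (auto simp: matched_def)
  then have "take j w = take (i + 1) w @ take (j - i - 1) (drop (i + 1) w)"
    using take_add[of "i + 1" "j - i - 1" w] by simp
  then show ?thesis using ij by (simp add: take_Suc_conv_app_nth)
qed

lemma balanced_call_matched:
  assumes "balanced C R v" "C \<inter> R = {}" "p < length v" "v ! p \<in> C"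
  shows "\<exists>q. matched C R v p q"
  using assms(1,3,4)
proof (induction arbitrary: p)
  case bal_nil
  then show ?case by simp
next
  case (bal_int a)
  then show ?case by simp
next
  case (bal_nest c r u)
  consider "p = 0" | p' where "p = Suc p'" "p' < length u" | "p = Suc (length u)"
    using bal_nest.prems(1) by (cases p) (auto simp: less_Suc_eq)
  then show ?case
  proof cases
    case 1
    have "matched C R (c # u @ [r]) 0 (length u + 1)"
      using bal_nest.hyps by (simp add: matched_def nth_append)
    then show ?thesis using 1 by blast
  next
    case 2
    then obtain q where "matched C R u p' q"
      using bal_nest by (auto simp: nth_append)
    from matched_append_shift[OF this, of "[c]" "[r]"] show ?thesis using 2 by auto
  next
    case 3
    then show ?thesis using bal_nest assms(2) by auto
  qed
next
  case (bal_app u v)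
  show ?case
  proof (cases "p < length u")
    case True
    then obtain q where "matched C R u p q" using bal_app by (auto simp: nth_append)
    from matched_append_shift[OF this, of "[]" v] show ?thesis by auto
  next
    case False
    then have "p - length u < length v" "v ! (p - length u) \<in> C"
      using bal_app.prems by (auto simp: nth_append)
    then obtain q where "matched C R v (p - length u) q" using bal_app.IH(2) by blast
    from matched_append_shift[OF this, of u "[]"] show ?thesis using False by auto
  qed
qed

lemma matched_last_pending_call:
  assumes "matched C R w i j" "C \<inter> R = {}"
  shows "pending_call C R (take j w) i"
    and "pending_call C R (take j w) k \<Longrightarrow> k \<le> i"
proof -
  define v where "v = take (j - i - 1) (drop (i + 1) w)"
  have ij: "i < j" "j < length w" "w ! i \<in> C" and bv: "balanced C R v"
    using assms(1) by (auto simp: matched_def v_def)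
  have tj: "take j w = (take i w @ [w ! i]) @ v"
    using matched_take_eq[OF assms(1)] by (simp add: v_def)
  have lv: "length v = j - i - 1" using ij by (simp add: v_def)
  show "pending_call C R (take j w) i"
    unfolding pending_call_def
  proof (intro conjI notI)
    show "i < length (take j w)" "take j w ! i \<in> C" using ij by simp_all
    assume "\<exists>q. matched C R (take j w) i q"
    then obtain q where "matched C R (take j w) i q" by blast
    then have q: "i < q" "q < j" "take j w ! q \<in> R" "balanced C R (take (q - i - 1) v)"
      using ij lv by (auto simp: matched_def tj)
    moreover have "take j w ! q = v ! (q - i - 1)" using q ij by (simp add: tj nth_append)
    moreover have "q - i - 1 < length v" using q lv by simp
    ultimately show False
      using balanced_prefix_next_not_return[OF bv assms(2), of "q - i - 1"] lv by auto
  qed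
  show "k \<le> i" if pk: "pending_call C R (take j w) k"
  proof (rule ccontr)
    assume "\<not> k \<le> i"
    moreover have "k < j" "take j w ! k \<in> C" using pk ij by (auto simp: pending_call_def)
    ultimately have "k - i - 1 < length v" "v ! (k - i - 1) \<in> C"
      using ij lv by (auto simp: tj nth_append)
    then obtain q where "matched C R v (k - i - 1) q"
      using balanced_call_matched[OF bv assms(2)] by blast
    from matched_append_shift[OF this, of "take i w @ [w ! i]" "[]"]
    have "matched C R (take j w) k (q + (i + 1))" using \<open>\<not> k \<le> i\<close> ij tj by simp
    then show False using pk by (auto simp: pending_call_def)
  qed
qed

section \<open>Well-nested words\<close>

definition well_nested :: "'a set \<Rightarrow> 'a set \<Rightarrow> 'a set \<Rightarrow> 'a set \<Rightarrow> 'a list \<Rightarrow> bool" where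
  "well_nested C R S T w \<longleftrightarrow> (\<forall>i j. matched C R w i j \<longrightarrow>
      (w ! i \<in> S \<and> w ! j \<in> S) \<or> (w ! i \<in> T \<and> w ! j \<in> T))"

lemma wn_iff: "w \<in> wn C R S T L \<longleftrightarrow> w \<in> L \<and> well_nested C R S T w"
  by (simp add: wn_def well_nested_def)

lemma well_nested_commute: "well_nested C R S T w \<longleftrightarrow> well_nested C R T S w"
  by (auto simp: well_nested_def)

lemma well_nested_infix:
  assumes "well_nested C R S T (x @ u @ y)"
  shows "well_nested C R S T u"
  unfolding well_nested_def
proof (intro allI impI)
  fix p q
  assume m: "matched C R u p q"
  then have "(x @ u @ y) ! (p + length x) = u ! p" "(x @ u @ y) ! (q + length x) = u ! q"
    by (auto simp: matched_def nth_append)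
  moreover have "matched C R (x @ u @ y) (p + length x) (q + length x)"
    using matched_append_shift[OF m] .
  ultimately show "(u ! p \<in> S \<and> u ! q \<in> S) \<or> (u ! p \<in> T \<and> u ! q \<in> T)"
    using assms unfolding well_nested_def by metis
qed

lemma first_nesting_violation:
  assumes "\<not> well_nested C R S T w"
  obtains i j where "matched C R w i j" "\<not> ((w ! i \<in> S \<and> w ! j \<in> S) \<or> (w ! i \<in> T \<and> w ! j \<in> T))"
    and "well_nested C R S T (take j w)"
proof -
  let ?bad = "\<lambda>j. \<exists>i. matched C R w i j \<and> \<not> ((w ! i \<in> S \<and> w ! j \<in> S) \<or> (w ! i \<in> T \<and> w ! j \<in> T))"
  obtain j where "?bad j" and least: "\<And>j'. j' < j \<Longrightarrow> \<not> ?bad j'"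
    using assms exists_least_iff[of ?bad] unfolding well_nested_def by blast
  moreover have "well_nested C R S T (take j w)"
    unfolding well_nested_def
  proof (intro allI impI)
    fix p q
    assume m: "matched C R (take j w) p q"
    then have "p < q" "q < j" by (auto simp: matched_def)
    moreover have "matched C R w p q"
      using matched_append_shift[OF m, of "[]" "drop j w"] by simp
    ultimately show "(take j w ! p \<in> S \<and> take j w ! q \<in> S) \<or> (take j w ! p \<in> T \<and> take j w ! q \<in> T)"
      using least[of q] by auto
  qed
  ultimately show thesis using that by blast
qed

lemma balanced_filter:
  assumes "balanced C R v" "well_nested C R S T v" "S \<inter> T = {}"
  shows "balanced (C \<inter> S) (R \<inter> S) (filter (\<lambda>x. x \<in> S) v)"
  using assms(1,2)
proof induction
  case bal_nil
  then show ?case by (simp add: balanced.bal_nil)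
next
  case (bal_int a)
  then show ?case by (auto intro: balanced.intros)
next
  case (bal_nest c r u)
  have "matched C R (c # u @ [r]) 0 (Suc (length u))"
    using bal_nest.hyps by (simp add: matched_def nth_append)
  then have "(c \<in> S \<and> r \<in> S) \<or> (c \<in> T \<and> r \<in> T)"
    using bal_nest.prems by (force simp: well_nested_def nth_append)
  moreover have "balanced (C \<inter> S) (R \<inter> S) (filter (\<lambda>x. x \<in> S) u)"
    using bal_nest.IH well_nested_infix[of C R S T "[c]" u "[r]"] bal_nest.prems by simp
  ultimately show ?case
    using bal_nest.hyps assms(3) by (auto intro: balanced.bal_nest)
next
  case (bal_app u v)
  then show ?case
    using well_nested_infix[of C R S T "[]" u v] well_nested_infix[of C R S T u v "[]"]
    by (auto intro: balanced.bal_app)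
qed

lemma call_before_balanced_pending:
  assumes "balanced C R y" "C \<inter> R = {}" "c \<in> C"
  shows "pending_call C R (x @ c # y) (length x)"
  unfolding pending_call_def
proof (intro conjI notI)
  show "length x < length (x @ c # y)" "(x @ c # y) ! length x \<in> C" using assms(3) by simp_all
  assume "\<exists>q. matched C R (x @ c # y) (length x) q"
  then obtain q where "matched C R (x @ c # y) (length x) q" by blast
  then have "q - length x - 1 < length y" "y ! (q - length x - 1) \<in> R"
    and "balanced C R (take (q - length x - 1) y)"
    by (auto simp: matched_def nth_append)
  then show False using balanced_prefix_next_not_return[OF assms(1,2)] by blast
qed

section \<open>Trace equivalence and shuffles\<close>

lemma swap_step_shuffle_iff:
  assumes "S \<inter> T = {}" "swap_step (indep S T) u v"
  shows "u \<in> shuffle S T P Q \<longleftrightarrow> v \<in> shuffle S T P Q"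
  using assms by (auto simp: swap_step_def indep_def shuffle_def)

lemma trace_equiv_shuffle:
  assumes "S \<inter> T = {}" "trace_equiv (indep S T) u w" "w \<in> shuffle S T P Q"
  shows "u \<in> shuffle S T P Q"
  using assms(2,3) unfolding trace_equiv_def
  by (induction rule: converse_rtranclp_induct) (auto simp: swap_step_shuffle_iff[OF assms(1)])

lemma trace_equiv_move_left:
  assumes "a \<in> S" "set ys \<subseteq> T"
  shows "trace_equiv (indep S T) (pre @ a # ys @ suf) (pre @ ys @ a # suf)"
  using assms(2)
proof (induction ys arbitrary: pre)
  case Nil
  then show ?case by (simp add: trace_equiv_def)
next
  case (Cons b ys)
  have "swap_step (indep S T) (pre @ a # b # ys @ suf) (pre @ b # a # ys @ suf)"
    using Cons.prems assms(1) unfolding swap_step_def indep_def by fastforce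
  moreover have "trace_equiv (indep S T) ((pre @ [b]) @ a # ys @ suf) ((pre @ [b]) @ ys @ a # suf)"
    using Cons.IH[of "pre @ [b]"] Cons.prems by simp
  ultimately show ?case
    unfolding trace_equiv_def by (simp add: converse_rtranclp_into_rtranclp)
qed

lemma exists_same_side_letter_after_crossing_pair:
  assumes wm: "well_matched (C \<inter> S) (R \<inter> S) (filter (\<lambda>x. x \<in> S) w)"
    and m: "matched C R w i j" and "w ! i \<in> S" "w ! j \<notin> S"
    and "well_nested C R S T (take j w)" "S \<inter> T = {}" "C \<inter> R = {}"
  shows "\<exists>a \<in> set (drop (Suc j) w). a \<in> S"
proof (rule ccontr)
  assume none: "\<not> (\<exists>a \<in> set (drop (Suc j) w). a \<in> S)"
  define v where "v = take (j - i - 1) (drop (i + 1) w)"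
  have "j < length w" "w ! i \<in> C" and bv: "balanced C R v"
    using m by (auto simp: matched_def v_def)
  have tj: "take j w = (take i w @ [w ! i]) @ v @ []"
    using matched_take_eq[OF m] by (simp add: v_def)
  have "filter (\<lambda>x. x \<in> S) w = filter (\<lambda>x. x \<in> S) (take j w) @ filter (\<lambda>x. x \<in> S) (drop j w)"
    by (metis append_take_drop_id filter_append)
  also have "drop j w = w ! j # drop (Suc j) w"
    using \<open>j < length w\<close> by (simp add: Cons_nth_drop_Suc)
  finally have fw: "filter (\<lambda>x. x \<in> S) w = filter (\<lambda>x. x \<in> S) (take i w) @ w ! i # filter (\<lambda>x. x \<in> S) v"
    using none assms(3,4) tj by (simp add: filter_empty_conv)
  have "well_nested C R S T v"
    using well_nested_infix[of C R S T "take i w @ [w ! i]" v "[]"] assms(5) tj by simp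
  then have "balanced (C \<inter> S) (R \<inter> S) (filter (\<lambda>x. x \<in> S) v)"
    using balanced_filter[OF bv _ assms(6)] by blast
  from call_before_balanced_pending[OF this _ , of "w ! i" "filter (\<lambda>x. x \<in> S) (take i w)"]
  have "pending_call (C \<inter> S) (R \<inter> S) (filter (\<lambda>x. x \<in> S) w) (length (filter (\<lambda>x. x \<in> S) (take i w)))"
    using assms(3,7) \<open>w ! i \<in> C\<close> fw by auto
  then show False using wm by (simp add: well_matched_def)
qed

lemma reduced_shuffle_no_crossing_pair:
  assumes ST: "S \<inter> T = {}" and CR: "C \<inter> R = {}"
    and w: "w \<in> red ord (indep S T) (shuffle S T P Q)"
    and wm: "well_matched (C \<inter> S) (R \<inter> S) (filter (\<lambda>x. x \<in> S) w)"
    and m: "matched C R w i j" and "w ! i \<in> S" "w ! j \<in> T"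
    and "well_nested C R S T (take j w)"
    and before: "\<forall>a\<in>S. (a, w ! j) \<in> ord (take j w)"
  shows False
proof -
  have wj: "w ! j \<notin> S" using \<open>w ! j \<in> T\<close> ST by blast
  obtain ys a z where d: "drop (Suc j) w = ys @ a # z" and "a \<in> S" and ys: "\<forall>y\<in>set ys. y \<notin> S"
    using exists_same_side_letter_after_crossing_pair[OF wm m \<open>w ! i \<in> S\<close> wj \<open>well_nested C R S T (take j w)\<close> ST CR]
    split_list_first_prop[of "drop (Suc j) w" "\<lambda>x. x \<in> S"] by blast
  have "w \<in> shuffle S T P Q" using w by (simp add: red_def)
  then have "set w \<subseteq> S \<union> T" by (auto simp: shuffle_def)
  then have "set ys \<subseteq> T"
    using ys d set_drop_subset[of "Suc j" w] by auto
  have "j < length w" using m by (simp add: matched_def)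
  then have "w = take j w @ w ! j # drop (Suc j) w" by (simp add: id_take_nth_drop)
  then have w_split: "w = take j w @ (w ! j # ys) @ a # z" using d by simp
  define u where "u = take j w @ a # (w ! j # ys) @ z"
  have "trace_equiv (indep S T) u w"
    unfolding u_def by (subst (2) w_split)
      (rule trace_equiv_move_left; use \<open>a \<in> S\<close> \<open>set ys \<subseteq> T\<close> \<open>w ! j \<in> T\<close> in simp)
  then have "u \<in> shuffle S T P Q"
    using trace_equiv_shuffle[OF ST] \<open>w \<in> shuffle S T P Q\<close> by blast
  moreover have "ctx_le ord u w"
    unfolding ctx_le_def
  proof (intro disjI2 exI conjI)
    show "u = take j w @ a # w ! j # ys @ z" by (simp add: u_def)
    show "w = take j w @ w ! j # ys @ a # z" using w_split by simp
    show "(a, w ! j) \<in> ord (take j w)" using before \<open>a \<in> S\<close> by blast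
  qed
  moreover have "u ! j = a" using \<open>j < length w\<close> by (simp add: u_def nth_append)
  then have "u \<noteq> w" using \<open>a \<in> S\<close> wj by metis
  ultimately show False
    using w \<open>trace_equiv (indep S T) u w\<close> by (auto simp: red_def)
qed

lemma indep_commute: "indep S T = indep T S"
  by (auto simp: indep_def)

lemma shuffle_commute: "shuffle S T P Q = shuffle T S Q P"
  by (auto simp: shuffle_def)

lemma coherent_at_matched_return:
  assumes coh: "coherent C1 R1 I1 C2 R2 I2 ord"
    and m: "matched (C1 \<union> C2) (R1 \<union> R2) w i j" and "w ! i \<in> C1"
    and "(C1 \<union> C2) \<inter> (R1 \<union> R2) = {}"
    and "w \<in> lists (C1 \<union> R1 \<union> I1 \<union> C2 \<union> R2 \<union> I2)"
  shows "\<forall>a \<in> C1 \<union> R1 \<union> I1. \<forall>r \<in> R2. (a, r) \<in> ord (take j w)"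
proof -
  have "take j w \<in> lists (C1 \<union> R1 \<union> I1 \<union> C2 \<union> R2 \<union> I2)"
    using assms(5) by (auto dest: in_set_takeD)
  moreover have "take j w ! i \<in> C1" using m \<open>w ! i \<in> C1\<close> by (simp add: matched_def)
  ultimately show ?thesis
    using coh matched_last_pending_call[OF m assms(4)] unfolding coherent_def by metis
qed

lemma coherent_commute: "coherent C1 R1 I1 C2 R2 I2 ord \<longleftrightarrow> coherent C2 R2 I2 C1 R1 I1 ord"
proof -
  have "C2 \<union> C1 = C1 \<union> C2" "R2 \<union> R1 = R1 \<union> R2"
    "C2 \<union> R2 \<union> I2 \<union> C1 \<union> R1 \<union> I1 = C1 \<union> R1 \<union> I1 \<union> C2 \<union> R2 \<union> I2"
    by blast+
  then show ?thesis unfolding coherent_def by (simp only:) blast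
qed

lemma reduced_shuffle_crossing_pair_absurd:
  assumes "vp_alphabet C1 R1 I1" "vp_alphabet C2 R2 I2"
    and ST: "(C1 \<union> R1 \<union> I1) \<inter> (C2 \<union> R2 \<union> I2) = {}"
    and coh: "coherent C1 R1 I1 C2 R2 I2 ord"
    and P1: "\<forall>x \<in> P1. well_matched C1 R1 x"
    and red: "w \<in> red ord (indep (C1 \<union> R1 \<union> I1) (C2 \<union> R2 \<union> I2)) (shuffle (C1 \<union> R1 \<union> I1) (C2 \<union> R2 \<union> I2) P1 P2)"
    and m: "matched (C1 \<union> C2) (R1 \<union> R2) w i j" and "w ! i \<in> C1" "w ! j \<in> R2"
    and nested: "well_nested (C1 \<union> C2) (R1 \<union> R2) (C1 \<union> R1 \<union> I1) (C2 \<union> R2 \<union> I2) (take j w)"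
  shows False
proof -
  let ?S1 = "C1 \<union> R1 \<union> I1" and ?S2 = "C2 \<union> R2 \<union> I2"
  have CR: "(C1 \<union> C2) \<inter> (R1 \<union> R2) = {}"
    and CS: "(C1 \<union> C2) \<inter> ?S1 = C1" "(R1 \<union> R2) \<inter> ?S1 = R1"
    using assms(1-3) by (auto simp: vp_alphabet_def)
  have w: "w \<in> shuffle ?S1 ?S2 P1 P2" using red by (simp add: red_def)
  then have "well_matched ((C1 \<union> C2) \<inter> ?S1) ((R1 \<union> R2) \<inter> ?S1) (filter (\<lambda>x. x \<in> ?S1) w)"
    using P1 unfolding CS by (simp add: shuffle_def)
  moreover have "w \<in> lists (C1 \<union> R1 \<union> I1 \<union> C2 \<union> R2 \<union> I2)"
    using w by (auto simp: shuffle_def)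
  then have "\<forall>a \<in> ?S1. (a, w ! j) \<in> ord (take j w)"
    using coherent_at_matched_return[OF coh m \<open>w ! i \<in> C1\<close> CR] \<open>w ! j \<in> R2\<close> by blast
  ultimately show False
    using reduced_shuffle_no_crossing_pair[OF ST CR red _ m _ _ nested] \<open>w ! i \<in> C1\<close> \<open>w ! j \<in> R2\<close>
    by blast
qed

theorem proposition3p17:
  fixes C1 R1 I1 C2 R2 I2 :: "'a set"
    and ord :: "'a list \<Rightarrow> ('a \<times> 'a) set"
    and P1 P2 :: "'a list set"
  assumes "vp_alphabet C1 R1 I1"
    and "vp_alphabet C2 R2 I2"
    and "(C1 \<union> R1 \<union> I1) \<inter> (C2 \<union> R2 \<union> I2) = {}"
    and "contextual_order (C1 \<union> R1 \<union> I1 \<union> C2 \<union> R2 \<union> I2) ord"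
    and "coherent C1 R1 I1 C2 R2 I2 ord"
    and "vpl C1 R1 I1 P1" and "\<forall>w \<in> P1. well_matched C1 R1 w"
    and "vpl C2 R2 I2 P2" and "\<forall>w \<in> P2. well_matched C2 R2 w"
  shows "red ord (indep (C1 \<union> R1 \<union> I1) (C2 \<union> R2 \<union> I2))
            (shuffle (C1 \<union> R1 \<union> I1) (C2 \<union> R2 \<union> I2) P1 P2)
         \<subseteq> wn (C1 \<union> C2) (R1 \<union> R2) (C1 \<union> R1 \<union> I1) (C2 \<union> R2 \<union> I2)
            (shuffle (C1 \<union> R1 \<union> I1) (C2 \<union> R2 \<union> I2) P1 P2)"
proof
  let ?S1 = "C1 \<union> R1 \<union> I1" and ?S2 = "C2 \<union> R2 \<union> I2"
  fix w
  assume red: "w \<in> red ord (indep ?S1 ?S2) (shuffle ?S1 ?S2 P1 P2)"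
  show "w \<in> wn (C1 \<union> C2) (R1 \<union> R2) ?S1 ?S2 (shuffle ?S1 ?S2 P1 P2)"
  proof (rule ccontr)
    assume "w \<notin> wn (C1 \<union> C2) (R1 \<union> R2) ?S1 ?S2 (shuffle ?S1 ?S2 P1 P2)"
    then have "\<not> well_nested (C1 \<union> C2) (R1 \<union> R2) ?S1 ?S2 w"
      using red by (simp add: wn_iff red_def)
    then obtain i j where m: "matched (C1 \<union> C2) (R1 \<union> R2) w i j"
      and crossing: "\<not> ((w ! i \<in> ?S1 \<and> w ! j \<in> ?S1) \<or> (w ! i \<in> ?S2 \<and> w ! j \<in> ?S2))"
      and nested: "well_nested (C1 \<union> C2) (R1 \<union> R2) ?S1 ?S2 (take j w)"
      by (rule first_nesting_violation)
    consider "w ! i \<in> C1" "w ! j \<in> R2" | "w ! i \<in> C2" "w ! j \<in> R1"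
      using m crossing by (auto simp: matched_def)
    then show False
    proof cases
      case 1
      then show False
        using reduced_shuffle_crossing_pair_absurd[OF assms(1-3,5,7) red m _ _ nested] by blast
    next
      case 2
      then show False
        using reduced_shuffle_crossing_pair_absurd[OF assms(2,1) _ _ assms(9), of ord w P1 i j]
          assms(3,5) red m nested
        by (auto simp: Int_commute Un_commute coherent_commute indep_commute shuffle_commute
            well_nested_commute)
    qed
  qed
qed

end
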